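(* Let $0<q<1$ and let $m_1:=\lim_{n\to\infty}\mathbb{E}\,C_1(\Pi_n)/n$ for $\Pi_n\sim\mathrm{Mallows}(n,q)$ (equivalently $m_1=\mathbb{P}(\Sigma(0)=0)$ for $\Sigma\sim\mathrm{Mallows}(\mathbb{Z},q)$). Then $$m_1=\sum_{s\ge0}\nu_s\,q^{2s}(1-q),\qquad\text{where}\qquad \nu_s=\frac{\prod_{i=1}^s\frac{q^{2i-1}}{(1-q^i)^2}}{\sum_{t\ge0}\prod_{i=1}^t\frac{q^{2i-1}}{(1-q^i)^2}}$$ (empty products equal $1$).
   Context: For $q>0$, $\Pi_n\sim\mathrm{Mallows}(n,q)$ means $\mathbb{P}(\Pi_n=\pi)\propto q^{\mathrm{inv}(\pi)}$ over permutations $\pi$ of $[n]=\{1,\dots,n\}$, where $\mathrm{inv}(\pi)$ is the number of pairs $i<j$ with $\pi(i)>\pi(j)$; $C_1(\pi)$ is the number of fixed points of $\pi$. $\mathrm{Mallows}(\mathbb{Z},q)$ denotes Gnedin and Olshanski's bi-infinite Mallows measure: the law of the random bijection $\Sigma$ of $\mathbb{Z}$ that is the almost sure pointwise limit of its patterns on $\{-n,\dots,n\}$, each of which is $\mathrm{Mallows}(\{-n,\dots,n\},q)$-distributed. *)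

theory Defs
  imports "HOL-Analysis.Analysis" "HOL-Combinatorics.Permutations"
begin

definition inversions :: "nat \<Rightarrow> (nat \<Rightarrow> nat) \<Rightarrow> nat" where
  "inversions n p = card {(i, j). i \<in> {1..n} \<and> j \<in> {1..n} \<and> i < j \<and> p i > p j}"

definition fixed_points :: "nat \<Rightarrow> (nat \<Rightarrow> nat) \<Rightarrow> nat" where
  "fixed_points n p = card {i \<in> {1..n}. p i = i}"

definition mallows_Z :: "real \<Rightarrow> nat \<Rightarrow> real" where
  "mallows_Z q n = (\<Sum>p\<in>{p. p permutes {1..n}}. q ^ inversions n p)"

definition mallows_expected_fixed_points :: "real \<Rightarrow> nat \<Rightarrow> real" where
  "mallows_expected_fixed_points q n =
     (\<Sum>p\<in>{p. p permutes {1..n}}. q ^ inversions n p * real (fixed_points n p)) / mallows_Z q n"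

definition nu_weight :: "real \<Rightarrow> nat \<Rightarrow> real" where
  "nu_weight q s = (\<Prod>i=1..s. q ^ (2 * i - 1) / (1 - q ^ i)^2)"

definition mallows_nu :: "real \<Rightarrow> nat \<Rightarrow> real" where
  "mallows_nu q s = nu_weight q s / (\<Sum>t. nu_weight q t)"

end

theory Submission
  imports Defs
begin

(*
  E C_1(Pi_n) is the sum over i of P(Pi_n(i) = i). Cut a permutation fixing i into its
  restrictions to {1..i-1} and {i..n}, and let A be the set of values taken on {1..i-1}: its
  inversion count is that of the two pieces plus the number of inversions between A and its
  complement. Summing over A according to the number s of its elements above i gives, with
  a = i - 1 and b = n - i,
      P(Pi_n(i) = i) = N(a,b) / (D(a,b) [n]_q),
  where D(a,b) = sum_s q^(s^2) [a,s]_q [b,s]_q = [a+b,a]_q (q-Vandermonde) and N(a,b) carries the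
  extra weight q^(2s). In terms of q-Pochhammer symbols, the s-th terms of both sums are
  q^(s^2) / (q;q)_s^2 = nu_weight q s times factors within O(q^a + q^b) of 1, so N/D is within
  O(q^a + q^b) of the limit ratio. Averaging over i and [n]_q -> 1/(1-q) give the theorem.
*)

definition bijs :: "nat set \<Rightarrow> nat set \<Rightarrow> (nat \<Rightarrow> nat) set" where
  "bijs P V = {p. bij_betw p P V \<and> (\<forall>x. x \<notin> P \<longrightarrow> p x = x)}"

definition inversions_on :: "nat set \<Rightarrow> (nat \<Rightarrow> nat) \<Rightarrow> nat" where
  "inversions_on P p = card {(x, y). x \<in> P \<and> y \<in> P \<and> x < y \<and> p y < p x}"

definition inversion_weight :: "real \<Rightarrow> nat set \<Rightarrow> nat set \<Rightarrow> real" where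
  "inversion_weight q P V = (\<Sum>p\<in>bijs P V. q ^ inversions_on P p)"

definition rank_in :: "nat set \<Rightarrow> nat \<Rightarrow> nat" where
  "rank_in V v = card {y\<in>V. y < v}"

definition qint :: "real \<Rightarrow> nat \<Rightarrow> real" where
  "qint q j = (\<Sum>t<j. q ^ t)"

definition qfact :: "real \<Rightarrow> nat \<Rightarrow> real" where
  "qfact q k = (\<Prod>j=1..k. qint q j)"

lemma qint_Suc: "qint q (Suc n) = qint q n + q ^ n"
  by (simp add: qint_def)

lemma qint_add: "qint q (a + b) = qint q a + q ^ a * qint q b"
  by (induction b) (simp_all add: qint_Suc qint_def[of q 0] algebra_simps power_add)

lemma qfact_Suc: "qfact q (Suc k) = qint q (Suc k) * qfact q k"
  unfolding qfact_def by (simp add: prod.cl_ivl_Suc mult.commute)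

lemma finite_bijs:
  assumes "finite P" "finite V"
  shows "finite (bijs P V)"
proof -
  have "bijs P V \<subseteq> (\<lambda>f x. if x \<in> P then f x else x) ` (PiE P (\<lambda>_. V))"
  proof
    fix p assume p: "p \<in> bijs P V"
    hence "p = (\<lambda>x. if x \<in> P then restrict p P x else x)"
      by (auto simp: bijs_def)
    moreover have "restrict p P \<in> PiE P (\<lambda>_. V)"
      using p by (auto simp: bijs_def bij_betw_def)
    ultimately show "p \<in> (\<lambda>f x. if x \<in> P then f x else x) ` (PiE P (\<lambda>_. V))"
      by blast
  qed
  moreover have "finite (PiE P (\<lambda>_. V))" using assms by (simp add: finite_PiE)
  ultimately show ?thesis using finite_subset by blast
qed

lemma bijs_empty: "bijs {} {} = {id}"
  by (auto simp: bijs_def fun_eq_iff)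

lemma permutes_eq_bijs: "{p. p permutes P} = bijs P P"
  unfolding bijs_def permutes_altdef by auto

lemma inversions_on_remove_min:
  assumes fin: "finite P" and m: "m \<in> P" and min: "\<forall>x\<in>P. m \<le> x"
    and p: "p \<in> bijs P V" and pm: "p m = v"
  shows "inversions_on P p = rank_in V v + inversions_on (P - {m}) (p(m:=m))"
proof -
  have bij: "bij_betw p P V" using p by (simp add: bijs_def)
  define S1 where "S1 = Pair m ` {y\<in>P. m < y \<and> p y < v}"
  define S2 where "S2 = {(x,y). x \<in> P - {m} \<and> y \<in> P - {m} \<and> x < y \<and> (p(m:=m)) y < (p(m:=m)) x}"
  have split: "{(x,y). x \<in> P \<and> y \<in> P \<and> x < y \<and> p y < p x} = S1 \<union> S2"
    using min pm m unfolding S1_def S2_def by (auto simp: le_less)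
  have fin_S2: "finite S2" unfolding S2_def
    by (rule finite_subset[of _ "P \<times> P"]) (use fin in auto)
  have below: "p ` {y\<in>P. m < y \<and> p y < v} = {y\<in>V. y < v}"
  proof
    show "p ` {y \<in> P. m < y \<and> p y < v} \<subseteq> {y \<in> V. y < v}"
      using bij by (auto simp: bij_betw_def)
    show "{y \<in> V. y < v} \<subseteq> p ` {y \<in> P. m < y \<and> p y < v}"
    proof
      fix y assume y: "y \<in> {y \<in> V. y < v}"
      then obtain x where x: "x \<in> P" "p x = y" using bij by (force simp: bij_betw_def)
      have "x \<noteq> m" using x y pm by auto
      hence "m < x" using min x by force
      thus "y \<in> p ` {y \<in> P. m < y \<and> p y < v}" using x y by auto
    qed
  qed
  have "card S1 = card {y\<in>P. m < y \<and> p y < v}"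
    unfolding S1_def by (rule card_image) (simp add: inj_on_def)
  also have "\<dots> = card (p ` {y\<in>P. m < y \<and> p y < v})"
    by (rule card_image[symmetric]) (rule inj_on_subset[OF bij_betw_imp_inj_on[OF bij]], auto)
  finally have card_S1: "card S1 = rank_in V v" by (simp add: below rank_in_def)
  have "inversions_on P p = card (S1 \<union> S2)" unfolding inversions_on_def split ..
  also have "\<dots> = card S1 + card S2"
    by (rule card_Un_disjoint) (use fin fin_S2 in \<open>auto simp: S1_def S2_def\<close>)
  finally show ?thesis using card_S1 by (simp add: inversions_on_def S2_def)
qed

lemma bij_betw_fix_min:
  assumes m: "m \<in> P" and v: "v \<in> V"
  shows "bij_betw (\<lambda>p. p(m:=m)) {p\<in>bijs P V. p m = v} (bijs (P - {m}) (V - {v}))"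
proof (rule bij_betw_byWitness[where f' = "\<lambda>s. s(m:=v)"])
  show "\<forall>a\<in>{p \<in> bijs P V. p m = v}. a(m := m, m := v) = a" by auto
  show "\<forall>a'\<in>bijs (P - {m}) (V - {v}). a'(m := v, m := m) = a'"
    by (auto simp: bijs_def fun_eq_iff)
  show "(\<lambda>p. p(m := m)) ` {p \<in> bijs P V. p m = v} \<subseteq> bijs (P - {m}) (V - {v})"
  proof
    fix s assume "s \<in> (\<lambda>p. p(m := m)) ` {p \<in> bijs P V. p m = v}"
    then obtain p where p: "p \<in> bijs P V" "p m = v" and s: "s = p(m:=m)" by auto
    have "bij_betw p (P - {m}) (V - {v})"
      using bij_betw_DiffI[of p P V "{m}" "{v}"] p m v by (auto simp: bijs_def)
    hence "bij_betw s (P - {m}) (V - {v})"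
      by (rule bij_betw_cong[THEN iffD1, rotated]) (auto simp: s)
    thus "s \<in> bijs (P - {m}) (V - {v})" using p(1) by (auto simp: bijs_def s)
  qed
  show "(\<lambda>s. s(m := v)) ` bijs (P - {m}) (V - {v}) \<subseteq> {p \<in> bijs P V. p m = v}"
  proof
    fix p assume "p \<in> (\<lambda>s. s(m := v)) ` bijs (P - {m}) (V - {v})"
    then obtain s where s: "s \<in> bijs (P - {m}) (V - {v})" and p: "p = s(m:=v)" by auto
    have "bij_betw p (P - {m}) (V - {v})"
      by (rule bij_betw_cong[THEN iffD1, OF _ s[unfolded bijs_def, THEN CollectD, THEN conjunct1]])
        (auto simp: p)
    hence "bij_betw p ((P - {m}) \<union> {m}) ((V - {v}) \<union> {p m})"
      by (intro notIn_Un_bij_betw) (auto simp: p)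
    moreover have "(P - {m}) \<union> {m} = P" "(V - {v}) \<union> {p m} = V" using m v by (auto simp: p)
    ultimately have "bij_betw p P V" by simp
    thus "p \<in> {p \<in> bijs P V. p m = v}" using s m by (auto simp: bijs_def p)
  qed
qed

lemma sum_bijs_fix_min:
  assumes fin: "finite P" and m: "m \<in> P" and min: "\<forall>x\<in>P. m \<le> x" and v: "v \<in> V"
  shows "(\<Sum>p\<in>{p\<in>bijs P V. p m = v}. q ^ inversions_on P p)
           = q ^ rank_in V v * inversion_weight q (P - {m}) (V - {v})"
proof -
  have "(\<Sum>p\<in>{p\<in>bijs P V. p m = v}. q ^ inversions_on P p) =
        (\<Sum>p\<in>{p\<in>bijs P V. p m = v}. q ^ rank_in V v * q ^ inversions_on (P - {m}) (p(m:=m)))"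
    by (rule sum.cong) (auto simp: inversions_on_remove_min[OF fin m min] power_add)
  also have "\<dots> = q ^ rank_in V v * inversion_weight q (P - {m}) (V - {v})"
    unfolding inversion_weight_def sum_distrib_left[symmetric]
    by (rule arg_cong[OF sum.reindex_bij_betw[OF bij_betw_fix_min[OF m v]]])
  finally show ?thesis .
qed

lemma sum_power_rank_in:
  assumes "finite V"
  shows "(\<Sum>v\<in>V. q ^ rank_in V v) = qint q (card V)"
  using assms
proof (induction V rule: finite_linorder_max_induct)
  case empty
  then show ?case by (simp add: qint_def)
next
  case (insert b A)
  have "b \<notin> A" using insert by auto
  have "(\<Sum>v\<in>A. q ^ rank_in (insert b A) v) = (\<Sum>v\<in>A. q ^ rank_in A v)"
  proof (rule sum.cong)
    fix v assume "v \<in> A"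
    hence "{y \<in> insert b A. y < v} = {y \<in> A. y < v}" using insert by auto
    thus "q ^ rank_in (insert b A) v = q ^ rank_in A v" by (simp add: rank_in_def)
  qed simp
  moreover have "rank_in (insert b A) b = card A"
  proof -
    have "{y \<in> insert b A. y < b} = A" using insert by auto
    thus ?thesis by (simp add: rank_in_def)
  qed
  ultimately show ?case
    using insert \<open>b \<notin> A\<close> by (simp add: qint_Suc add.commute)
qed

lemma inversion_weight_eq_qfact:
  assumes "finite P" "finite V" "card P = card V"
  shows "inversion_weight q P V = qfact q (card P)"
  using assms
proof (induction "card P" arbitrary: P V)
  case 0
  hence "P = {}" "V = {}" by auto
  thus ?case by (simp add: inversion_weight_def bijs_empty inversions_on_def qfact_def)
next
  case (Suc k)
  define m where "m = Min P"
  have "P \<noteq> {}" using Suc by auto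
  hence m: "m \<in> P" "\<forall>x\<in>P. m \<le> x" using Suc by (auto simp: m_def)
  have "inversion_weight q P V = (\<Sum>v\<in>V. \<Sum>p\<in>{p\<in>bijs P V. p m = v}. q ^ inversions_on P p)"
    unfolding inversion_weight_def
    by (rule sum.group[symmetric])
      (use Suc m finite_bijs[of P V] in \<open>auto simp: bijs_def bij_betw_def\<close>)
  also have "\<dots> = (\<Sum>v\<in>V. q ^ rank_in V v * qfact q k)"
  proof (rule sum.cong)
    fix v assume v: "v \<in> V"
    have "inversion_weight q (P - {m}) (V - {v}) = qfact q (card (P - {m}))"
      by (rule Suc.hyps) (use Suc m v in auto)
    also have "card (P - {m}) = k" using Suc m by simp
    finally show "(\<Sum>p\<in>{p\<in>bijs P V. p m = v}. q ^ inversions_on P p) = q ^ rank_in V v * qfact q k"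
      using sum_bijs_fix_min[OF Suc.prems(1) m v] Suc m by simp
  qed simp
  also have "\<dots> = qfact q (card P)"
    using Suc by (simp add: sum_distrib_right[symmetric] sum_power_rank_in) (metis qfact_Suc)
  finally show ?case .
qed

definition glue :: "nat set \<Rightarrow> (nat \<Rightarrow> nat) \<Rightarrow> (nat \<Rightarrow> nat) \<Rightarrow> nat \<Rightarrow> nat" where
  "glue P1 p1 p2 = (\<lambda>x. if x \<in> P1 then p1 x else p2 x)"

definition cross_inversions :: "nat set \<Rightarrow> nat set \<Rightarrow> nat" where
  "cross_inversions V A = card {(u, w). u \<in> A \<and> w \<in> V - A \<and> w < u}"

lemma inversions_on_glue:
  assumes f1: "finite P1" and f2: "finite P2" and disj: "P1 \<inter> P2 = {}"
    and below: "\<forall>x\<in>P1. \<forall>y\<in>P2. x < y"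
    and p1: "p1 \<in> bijs P1 A" and p2: "p2 \<in> bijs P2 (V - A)"
  shows "inversions_on (P1 \<union> P2) (glue P1 p1 p2)
           = inversions_on P1 p1 + inversions_on P2 p2 + cross_inversions V A"
proof -
  let ?p = "glue P1 p1 p2"
  define S11 where "S11 = {(x,y). x \<in> P1 \<and> y \<in> P1 \<and> x < y \<and> p1 y < p1 x}"
  define S22 where "S22 = {(x,y). x \<in> P2 \<and> y \<in> P2 \<and> x < y \<and> p2 y < p2 x}"
  define S12 where "S12 = {(x,y). x \<in> P1 \<and> y \<in> P2 \<and> p2 y < p1 x}"
  have b1: "bij_betw p1 P1 A" and b2: "bij_betw p2 P2 (V - A)"
    using p1 p2 by (auto simp: bijs_def)
  have split: "{(x,y). x \<in> P1 \<union> P2 \<and> y \<in> P1 \<union> P2 \<and> x < y \<and> ?p y < ?p x} = S11 \<union> S22 \<union> S12"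
    using disj below unfolding S11_def S22_def S12_def glue_def by (auto; force)
  have fin: "finite S11" "finite S22" "finite S12"
    unfolding S11_def S22_def S12_def
    by (rule finite_subset[of _ "P1 \<times> P1"], use f1 in auto)
       (rule finite_subset[of _ "P2 \<times> P2"], use f2 in auto,
        rule finite_subset[of _ "P1 \<times> P2"], use f1 f2 in auto)
  have "map_prod p1 p2 ` S12 = {(u,w). u \<in> A \<and> w \<in> V - A \<and> w < u}"
  proof
    show "map_prod p1 p2 ` S12 \<subseteq> {(u, w). u \<in> A \<and> w \<in> V - A \<and> w < u}"
      using b1 b2 unfolding S12_def bij_betw_def by auto
    show "{(u, w). u \<in> A \<and> w \<in> V - A \<and> w < u} \<subseteq> map_prod p1 p2 ` S12"
    proof safe
      fix u w assume u: "u \<in> A" and w: "w \<in> V" "w \<notin> A" and "w < u"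
      obtain x where "x \<in> P1" "p1 x = u" using b1 u unfolding bij_betw_def by force
      moreover obtain y where "y \<in> P2" "p2 y = w" using b2 w unfolding bij_betw_def by force
      ultimately show "(u, w) \<in> map_prod p1 p2 ` S12"
        using \<open>w < u\<close> unfolding S12_def by (auto intro!: image_eqI[of _ _ "(x,y)"])
    qed
  qed
  moreover have "inj_on (map_prod p1 p2) S12"
    using bij_betw_imp_inj_on[OF b1] bij_betw_imp_inj_on[OF b2]
    unfolding S12_def inj_on_def by auto
  ultimately have card_S12: "card S12 = cross_inversions V A"
    unfolding cross_inversions_def by (metis card_image)
  have "inversions_on (P1 \<union> P2) ?p = card (S11 \<union> S22 \<union> S12)"
    unfolding inversions_on_def split ..
  also have "\<dots> = card S11 + card S22 + card S12"
    using fin disj below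
    by (subst card_Un_disjoint, auto simp: S11_def S22_def S12_def)
       (subst card_Un_disjoint, auto simp: S11_def S22_def)
  finally show ?thesis using card_S12 by (simp add: inversions_on_def S11_def S22_def)
qed

lemma bijs_restrict_Un:
  assumes disj: "P1 \<inter> P2 = {}" and p: "p \<in> bijs (P1 \<union> P2) V" and pA: "p ` P1 = A"
  shows "(\<lambda>x. if x \<in> P1 then p x else x) \<in> bijs P1 A"
    and "(\<lambda>x. if x \<in> P2 then p x else x) \<in> bijs P2 (V - A)"
proof -
  have b: "bij_betw p (P1 \<union> P2) V" using p by (auto simp: bijs_def)
  have inj: "inj_on p (P1 \<union> P2)" using b by (auto simp: bij_betw_def)
  have im: "p ` P2 = V - A"
  proof
    show "p ` P2 \<subseteq> V - A"
    proof
      fix y assume "y \<in> p ` P2"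
      then obtain x where x: "x \<in> P2" "y = p x" by auto
      have "y \<notin> A"
      proof
        assume "y \<in> A"
        then obtain z where "z \<in> P1" "p z = y" using pA by auto
        with x inj disj show False by (auto simp: inj_on_def)
      qed
      moreover have "y \<in> V" using b x by (auto simp: bij_betw_def)
      ultimately show "y \<in> V - A" by auto
    qed
    show "V - A \<subseteq> p ` P2"
      using b pA by (force simp: bij_betw_def)
  qed
  have "bij_betw p P1 A" "bij_betw p P2 (V - A)"
    using pA im inj_on_subset[OF inj] by (auto simp: bij_betw_def)
  hence "bij_betw (\<lambda>x. if x \<in> P1 then p x else x) P1 A"
    "bij_betw (\<lambda>x. if x \<in> P2 then p x else x) P2 (V - A)"
    by (auto intro: bij_betw_cong[THEN iffD1, rotated])
  thus "(\<lambda>x. if x \<in> P1 then p x else x) \<in> bijs P1 A"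
    "(\<lambda>x. if x \<in> P2 then p x else x) \<in> bijs P2 (V - A)"
    by (auto simp: bijs_def)
qed

lemma bij_betw_glue:
  assumes disj: "P1 \<inter> P2 = {}" and AV: "A \<subseteq> V"
  shows "bij_betw (\<lambda>(p1, p2). glue P1 p1 p2) (bijs P1 A \<times> bijs P2 (V - A))
           {p \<in> bijs (P1 \<union> P2) V. p ` P1 = A}"
proof (rule bij_betw_byWitness[where
      f' = "\<lambda>p. (\<lambda>x. if x \<in> P1 then p x else x, \<lambda>x. if x \<in> P2 then p x else x)"])
  show "\<forall>a\<in>bijs P1 A \<times> bijs P2 (V - A). (\<lambda>p. (\<lambda>x. if x \<in> P1 then p x else x,
          \<lambda>x. if x \<in> P2 then p x else x)) ((\<lambda>(p1, p2). glue P1 p1 p2) a) = a"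
    using disj by (auto simp: bijs_def glue_def fun_eq_iff)
  show "\<forall>a'\<in>{p \<in> bijs (P1 \<union> P2) V. p ` P1 = A}. (\<lambda>(p1, p2). glue P1 p1 p2)
          (\<lambda>x. if x \<in> P1 then a' x else x, \<lambda>x. if x \<in> P2 then a' x else x) = a'"
    by (auto simp: bijs_def glue_def fun_eq_iff)
  show "(\<lambda>(p1, p2). glue P1 p1 p2) ` (bijs P1 A \<times> bijs P2 (V - A))
          \<subseteq> {p \<in> bijs (P1 \<union> P2) V. p ` P1 = A}"
  proof clarify
    fix p1 p2 assume p1: "p1 \<in> bijs P1 A" and p2: "p2 \<in> bijs P2 (V - A)"
    have b1: "bij_betw p1 P1 A" and b2: "bij_betw p2 P2 (V - A)"
      using p1 p2 by (auto simp: bijs_def)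
    have "bij_betw (glue P1 p1 p2) P1 A"
      by (rule bij_betw_cong[THEN iffD1, OF _ b1]) (auto simp: glue_def)
    moreover have "bij_betw (glue P1 p1 p2) P2 (V - A)"
      by (rule bij_betw_cong[THEN iffD1, OF _ b2]) (use disj in \<open>auto simp: glue_def\<close>)
    ultimately have "bij_betw (glue P1 p1 p2) (P1 \<union> P2) (A \<union> (V - A))"
      by (rule bij_betw_combine) auto
    moreover have "A \<union> (V - A) = V" using AV by auto
    ultimately have "glue P1 p1 p2 \<in> bijs (P1 \<union> P2) V"
      using p1 p2 by (auto simp: bijs_def glue_def)
    moreover have "glue P1 p1 p2 ` P1 = A" using b1 by (auto simp: glue_def bij_betw_def)
    ultimately show "glue P1 p1 p2 \<in> bijs (P1 \<union> P2) V \<and> glue P1 p1 p2 ` P1 = A" by simp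
  qed
  show "(\<lambda>p. (\<lambda>x. if x \<in> P1 then p x else x, \<lambda>x. if x \<in> P2 then p x else x)) `
          {p \<in> bijs (P1 \<union> P2) V. p ` P1 = A} \<subseteq> bijs P1 A \<times> bijs P2 (V - A)"
  proof
    fix pp assume "pp \<in> (\<lambda>p. (\<lambda>x. if x \<in> P1 then p x else x, \<lambda>x. if x \<in> P2 then p x else x)) `
      {p \<in> bijs (P1 \<union> P2) V. p ` P1 = A}"
    then obtain p where p: "p \<in> bijs (P1 \<union> P2) V" and pA: "p ` P1 = A"
      and pp: "pp = (\<lambda>x. if x \<in> P1 then p x else x, \<lambda>x. if x \<in> P2 then p x else x)" by auto
    thus "pp \<in> bijs P1 A \<times> bijs P2 (V - A)" using bijs_restrict_Un[OF disj p pA] by simp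
  qed
qed

lemma sum_bijs_Un:
  assumes "finite P1" "finite P2" "finite V" and disj: "P1 \<inter> P2 = {}"
  shows "(\<Sum>p\<in>bijs (P1 \<union> P2) V. F p) =
    (\<Sum>A\<in>{A. A \<subseteq> V \<and> card A = card P1}.
       \<Sum>pp\<in>bijs P1 A \<times> bijs P2 (V - A). F (glue P1 (fst pp) (snd pp)))"
proof -
  have "(\<Sum>p\<in>bijs (P1 \<union> P2) V. F p) =
      (\<Sum>A\<in>{A. A \<subseteq> V \<and> card A = card P1}. \<Sum>p\<in>{p\<in>bijs (P1 \<union> P2) V. p ` P1 = A}. F p)"
  proof (rule sum.group[symmetric])
    show "finite (bijs (P1 \<union> P2) V)" using assms by (simp add: finite_bijs)
    show "(\<lambda>p. p ` P1) ` bijs (P1 \<union> P2) V \<subseteq> {A. A \<subseteq> V \<and> card A = card P1}"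
    proof safe
      fix p assume "p \<in> bijs (P1 \<union> P2) V"
      hence b: "bij_betw p (P1 \<union> P2) V" by (auto simp: bijs_def)
      thus "\<And>x. x \<in> P1 \<Longrightarrow> p x \<in> V" by (auto simp: bij_betw_def)
      show "card (p ` P1) = card P1"
        by (rule card_image) (use b in \<open>auto simp: bij_betw_def intro: inj_on_subset\<close>)
    qed
  qed (use assms in simp)
  also have "\<dots> = (\<Sum>A\<in>{A. A \<subseteq> V \<and> card A = card P1}.
                    \<Sum>pp\<in>bijs P1 A \<times> bijs P2 (V - A). F (glue P1 (fst pp) (snd pp)))"
    using sum.reindex_bij_betw[OF bij_betw_glue[OF disj], of _ V F]
    by (intro sum.cong) (auto simp: case_prod_beta')
  finally show ?thesis .
qed

fun qbinom :: "real \<Rightarrow> nat \<Rightarrow> nat \<Rightarrow> real" where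
  "qbinom q m 0 = 1"
| "qbinom q 0 (Suc k) = 0"
| "qbinom q (Suc m) (Suc k) = qbinom q m (Suc k) + q ^ (m - k) * qbinom q m k"

lemma qbinom_eq_0: "m < k \<Longrightarrow> qbinom q m k = 0"
  by (induction q m k rule: qbinom.induct) auto

lemma qbinom_qfact: "k \<le> m \<Longrightarrow> qbinom q m k * qfact q k * qfact q (m - k) = qfact q m"
proof (induction q m k rule: qbinom.induct)
  case (1 q m)
  then show ?case by (simp add: qfact_def)
next
  case (2 q k)
  then show ?case by simp
next
  case (3 q m j)
  hence jm: "j \<le> m" by simp
  have last: "qbinom q m j * qfact q (Suc j) * qfact q (m - j) = qint q (Suc j) * qfact q m"
    using "3.IH"(2)[OF jm] by (simp add: qfact_Suc algebra_simps)
  have first: "qbinom q m (Suc j) * qfact q (Suc j) * qfact q (m - j) = qint q (m - j) * qfact q m"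
  proof (cases "j = m")
    case True
    thus ?thesis by (simp add: qbinom_eq_0 qint_def)
  next
    case False
    hence "Suc j \<le> m" "m - j = Suc (m - Suc j)" using jm by auto
    thus ?thesis using "3.IH"(1) by (simp add: qfact_Suc algebra_simps)
  qed
  have "qbinom q (Suc m) (Suc j) * qfact q (Suc j) * qfact q (Suc m - Suc j)
      = qfact q m * (qint q (m - j) + q ^ (m - j) * qint q (Suc j))"
    using first last by (simp add: algebra_simps)
  also have "qint q (m - j) + q ^ (m - j) * qint q (Suc j) = qint q (Suc m)"
    using qint_add[of q "m - j" "Suc j"] jm by simp
  finally show ?case by (simp add: qfact_Suc mult.commute)
qed

definition cross_weight :: "real \<Rightarrow> nat set \<Rightarrow> nat \<Rightarrow> real" where
  "cross_weight q U k = (\<Sum>A\<in>{A. A \<subseteq> U \<and> card A = k}. q ^ cross_inversions U A)"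

lemma cross_inversions_insert_max:
  assumes U: "finite U" and max: "\<forall>a\<in>U. a < b" and AU: "A \<subseteq> U"
  shows "cross_inversions (insert b U) A = cross_inversions U A"
    and "cross_inversions (insert b U) (insert b A) = cross_inversions U A + (card U - card A)"
proof -
  have "{(u,w). u \<in> A \<and> w \<in> insert b U - A \<and> w < u} = {(u,w). u \<in> A \<and> w \<in> U - A \<and> w < u}"
    using max AU by fastforce
  thus "cross_inversions (insert b U) A = cross_inversions U A" by (simp add: cross_inversions_def)
  have split: "{(u,w). u \<in> insert b A \<and> w \<in> insert b U - insert b A \<and> w < u} =
        {(u,w). u \<in> A \<and> w \<in> U - A \<and> w < u} \<union> Pair b ` (U - A)"
    using max AU by auto
  have "card {(u,w). u \<in> insert b A \<and> w \<in> insert b U - insert b A \<and> w < u}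
      = card {(u,w). u \<in> A \<and> w \<in> U - A \<and> w < u} + card (Pair b ` (U - A))"
    unfolding split
    by (rule card_Un_disjoint) (use U AU max in \<open>auto intro: finite_subset[of _ "U \<times> U"]\<close>)
  moreover have "card (Pair b ` (U - A)) = card (U - A)"
    by (rule card_image) (simp add: inj_on_def)
  moreover have "card (U - A) = card U - card A"
    using U AU by (simp add: card_Diff_subset finite_subset)
  ultimately show "cross_inversions (insert b U) (insert b A) = cross_inversions U A + (card U - card A)"
    by (simp add: cross_inversions_def)
qed

lemma subsets_insert_card_Suc:
  assumes "finite U" "b \<notin> U"
  shows "{A. A \<subseteq> insert b U \<and> card A = Suc j} =
           {A. A \<subseteq> U \<and> card A = Suc j} \<union> insert b ` {A. A \<subseteq> U \<and> card A = j}"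
proof (intro equalityI subsetI)
  fix A assume A: "A \<in> {A. A \<subseteq> insert b U \<and> card A = Suc j}"
  show "A \<in> {A. A \<subseteq> U \<and> card A = Suc j} \<union> insert b ` {A. A \<subseteq> U \<and> card A = j}"
  proof (cases "b \<in> A")
    case True
    have "finite A" using A assms(1) by (auto dest: finite_subset)
    hence "A - {b} \<in> {A. A \<subseteq> U \<and> card A = j}" using A True by auto
    moreover have "A = insert b (A - {b})" using True by auto
    ultimately show ?thesis by blast
  qed (use A in blast)
next
  fix A assume "A \<in> {A. A \<subseteq> U \<and> card A = Suc j} \<union> insert b ` {A. A \<subseteq> U \<and> card A = j}"
  thus "A \<in> {A. A \<subseteq> insert b U \<and> card A = Suc j}"
    using assms by (auto simp: finite_subset subset_iff card_insert_if)
qed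

lemma cross_weight_eq_qbinom:
  assumes "finite U"
  shows "cross_weight q U k = qbinom q (card U) k"
  using assms
proof (induction U arbitrary: k rule: finite_linorder_max_induct)
  case empty
  have subsets: "{A. A \<subseteq> {} \<and> card A = k} = (if k = 0 then {{}} else {})" by auto
  show ?case unfolding cross_weight_def subsets
    by (cases k) (simp_all add: cross_inversions_def)
next
  case (insert b U)
  have "b \<notin> U" using insert by auto
  show ?case
  proof (cases k)
    case 0
    have "{A. A \<subseteq> insert b U \<and> card A = 0} = {{}}" using insert(1) by (auto dest: finite_subset)
    thus ?thesis using 0 by (simp add: cross_weight_def cross_inversions_def)
  next
    case (Suc j)
    have inj: "inj_on (insert b) {A. A \<subseteq> U \<and> card A = j}"
      using \<open>b \<notin> U\<close> unfolding inj_on_def by (metis Diff_insert_absorb mem_Collect_eq subset_iff)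
    have "cross_weight q (insert b U) k
        = (\<Sum>A\<in>{A. A \<subseteq> U \<and> card A = k}. q ^ cross_inversions (insert b U) A)
        + (\<Sum>A\<in>{A. A \<subseteq> U \<and> card A = j}. q ^ cross_inversions (insert b U) (insert b A))"
      unfolding cross_weight_def Suc subsets_insert_card_Suc[OF insert(1) \<open>b \<notin> U\<close>]
      by (subst sum.union_disjoint) (use insert(1) \<open>b \<notin> U\<close> in \<open>auto simp: sum.reindex[OF inj]\<close>)
    also have "\<dots> = cross_weight q U k + q ^ (card U - j) * cross_weight q U j"
      using cross_inversions_insert_max[OF insert(1,2)]
      by (simp add: cross_weight_def sum_distrib_left power_add mult.commute)
    finally show ?thesis using insert \<open>b \<notin> U\<close> Suc by simp
  qed
qed

lemma cross_inversions_split: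
  fixes c :: nat
  assumes U: "finite U" and AU: "A \<subseteq> U"
  defines "L \<equiv> {u\<in>U. u < c}" and "R \<equiv> {u\<in>U. c \<le> u}"
  shows "cross_inversions U A = cross_inversions L (A \<inter> L) + cross_inversions R (A \<inter> R)
           + card (A \<inter> R) * card (L - A)"
proof -
  define S1 where "S1 = {(u,w). u \<in> A \<inter> L \<and> w \<in> L - A \<inter> L \<and> w < u}"
  define S2 where "S2 = {(u,w). u \<in> A \<inter> R \<and> w \<in> R - A \<inter> R \<and> w < u}"
  define S3 where "S3 = (A \<inter> R) \<times> (L - A)"
  have split: "{(u,w). u \<in> A \<and> w \<in> U - A \<and> w < u} = S1 \<union> S2 \<union> S3"
    using AU unfolding S1_def S2_def S3_def L_def R_def by auto
  have fin: "finite S1" "finite S2" "finite S3"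
    unfolding S1_def S2_def S3_def
    by (auto intro: finite_subset[of _ "U \<times> U"] simp: U L_def R_def)
  have "cross_inversions U A = card (S1 \<union> S2 \<union> S3)" unfolding cross_inversions_def split ..
  also have "\<dots> = card S1 + card S2 + card S3"
    using fin
    by (subst card_Un_disjoint, auto simp: S1_def S2_def S3_def L_def R_def)
       (subst card_Un_disjoint, auto simp: S1_def S2_def L_def R_def)
  finally show ?thesis by (simp add: cross_inversions_def S1_def S2_def S3_def card_cartesian_product)
qed

lemma sum_cartesian_product_mult:
  "(\<Sum>xy\<in>X \<times> Y. f (fst xy) * g (snd xy)) = (\<Sum>x\<in>X. f x) * (\<Sum>y\<in>Y. (g y :: real))"
  by (simp add: sum_product sum.cartesian_product case_prod_beta')

lemma bij_betw_Un_subsets: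
  assumes fin: "finite L" "finite R" and disj: "L \<inter> R = {}" and "s \<le> k"
  shows "bij_betw (\<lambda>(B, T). B \<union> T) ({B. B \<subseteq> L \<and> card B = k - s} \<times> {T. T \<subseteq> R \<and> card T = s})
           {A \<in> {A. A \<subseteq> L \<union> R \<and> card A = k}. card (A \<inter> R) = s}"
proof -
  have card_halves: "card A = card (A \<inter> L) + card (A \<inter> R)" if "A \<subseteq> L \<union> R" for A
  proof -
    have "A = (A \<inter> L) \<union> (A \<inter> R)" using that by auto
    also have "card \<dots> = card (A \<inter> L) + card (A \<inter> R)"
      by (rule card_Un_disjoint) (use fin disj in auto)
    finally show ?thesis .
  qed
  show ?thesis
  proof (rule bij_betw_byWitness[where f' = "\<lambda>A. (A \<inter> L, A \<inter> R)"])
    show "(\<lambda>(B, T). B \<union> T) ` ({B. B \<subseteq> L \<and> card B = k - s} \<times> {T. T \<subseteq> R \<and> card T = s})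
            \<subseteq> {A \<in> {A. A \<subseteq> L \<union> R \<and> card A = k}. card (A \<inter> R) = s}"
    proof
      fix A assume "A \<in> (\<lambda>(B, T). B \<union> T) ` ({B. B \<subseteq> L \<and> card B = k - s} \<times> {T. T \<subseteq> R \<and> card T = s})"
      then obtain B T where B: "B \<subseteq> L" "card B = k - s" and T: "T \<subseteq> R" "card T = s"
        and A: "A = B \<union> T" by auto
      have AU: "A \<subseteq> L \<union> R" unfolding A using B(1) T(1) by blast
      have AL: "A \<inter> L = B" unfolding A using B(1) T(1) disj by blast
      have AR: "A \<inter> R = T" unfolding A using B(1) T(1) disj by blast
      have "card A = k" using card_halves[OF AU] B T \<open>s \<le> k\<close> unfolding AL AR by simp
      thus "A \<in> {A \<in> {A. A \<subseteq> L \<union> R \<and> card A = k}. card (A \<inter> R) = s}" using AU AR T by simp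
    qed
    show "(\<lambda>A. (A \<inter> L, A \<inter> R)) ` {A \<in> {A. A \<subseteq> L \<union> R \<and> card A = k}. card (A \<inter> R) = s}
            \<subseteq> {B. B \<subseteq> L \<and> card B = k - s} \<times> {T. T \<subseteq> R \<and> card T = s}"
    proof
      fix x assume "x \<in> (\<lambda>A. (A \<inter> L, A \<inter> R)) ` {A \<in> {A. A \<subseteq> L \<union> R \<and> card A = k}. card (A \<inter> R) = s}"
      then obtain A where A: "A \<subseteq> L \<union> R" "card A = k" "card (A \<inter> R) = s"
        and x: "x = (A \<inter> L, A \<inter> R)" by auto
      have "card (A \<inter> L) = k - s" using card_halves[OF A(1)] A by simp
      thus "x \<in> {B. B \<subseteq> L \<and> card B = k - s} \<times> {T. T \<subseteq> R \<and> card T = s}" using A x by simp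
    qed
  qed (use disj in auto)
qed

text \<open>If \<open>s\<close> points of \<open>A\<close> lie in \<open>R\<close>, then \<open>A\<close> misses exactly \<open>s\<close> points of \<open>L\<close>, all below
  them: these are the \<open>s * s\<close> crossing inversions between the two halves.\<close>
lemma sum_subsets_split:
  fixes \<phi> :: "nat \<Rightarrow> real" and c :: nat
  assumes U: "finite U"
  defines "L \<equiv> {u\<in>U. u < c}" and "R \<equiv> {u\<in>U. c \<le> u}"
  shows "(\<Sum>A\<in>{A. A \<subseteq> U \<and> card A = card L}. q ^ cross_inversions U A * \<phi> (card (A \<inter> R))) =
         (\<Sum>s=0..card L. q ^ (s * s) * \<phi> s * cross_weight q L (card L - s) * cross_weight q R s)"
proof -
  have fin: "finite L" "finite R" using U by (auto simp: L_def R_def)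
  have LR: "U = L \<union> R" "L \<inter> R = {}" by (auto simp: L_def R_def)
  have "(\<Sum>A\<in>{A. A \<subseteq> U \<and> card A = card L}. q ^ cross_inversions U A * \<phi> (card (A \<inter> R))) =
    (\<Sum>s=0..card L. \<Sum>A\<in>{A \<in> {A. A \<subseteq> U \<and> card A = card L}. card (A \<inter> R) = s}.
       q ^ cross_inversions U A * \<phi> (card (A \<inter> R)))"
  proof (rule sum.group[symmetric])
    show "(\<lambda>A. card (A \<inter> R)) ` {A. A \<subseteq> U \<and> card A = card L} \<subseteq> {0..card L}"
    proof (rule image_subsetI)
      fix A assume A: "A \<in> {A. A \<subseteq> U \<and> card A = card L}"
      hence "card (A \<inter> R) \<le> card A" using U by (intro card_mono) (auto dest: finite_subset)
      thus "card (A \<inter> R) \<in> {0..card L}" using A by simp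
    qed
  qed (use U in simp_all)
  also have "\<dots> = (\<Sum>s=0..card L. q ^ (s * s) * \<phi> s * cross_weight q L (card L - s) * cross_weight q R s)"
  proof (rule sum.cong[OF refl])
    fix s assume s: "s \<in> {0..card L}"
    let ?SB = "{B. B \<subseteq> L \<and> card B = card L - s}" and ?ST = "{T. T \<subseteq> R \<and> card T = s}"
    let ?SA = "{A \<in> {A. A \<subseteq> U \<and> card A = card L}. card (A \<inter> R) = s}"
    have halves: "bij_betw (\<lambda>(B, T). B \<union> T) (?SB \<times> ?ST) ?SA"
      using bij_betw_Un_subsets[OF fin LR(2), of s "card L"] s unfolding LR(1)[symmetric] by simp
    have "(\<Sum>A\<in>?SA. q ^ cross_inversions U A * \<phi> (card (A \<inter> R))) =
          (\<Sum>BT\<in>?SB \<times> ?ST. q ^ cross_inversions U (fst BT \<union> snd BT)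
                              * \<phi> (card ((fst BT \<union> snd BT) \<inter> R)))"
      using sum.reindex_bij_betw[OF halves, of "\<lambda>A. q ^ cross_inversions U A * \<phi> (card (A \<inter> R))"]
      by (simp add: case_prod_beta')
    also have "\<dots> = (\<Sum>BT\<in>?SB \<times> ?ST. q ^ (s * s) * \<phi> s *
                     (q ^ cross_inversions L (fst BT) * q ^ cross_inversions R (snd BT)))"
    proof (rule sum.cong[OF refl])
      fix BT assume "BT \<in> ?SB \<times> ?ST"
      then obtain B T where B: "B \<subseteq> L" "card B = card L - s" and T: "T \<subseteq> R" "card T = s"
        and BT: "BT = (B, T)" by auto
      have halves_BT: "(B \<union> T) \<inter> L = B" "(B \<union> T) \<inter> R = T" using B T LR by auto
      have "L - (B \<union> T) = L - B" using T LR by auto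
      moreover have "card (L - B) = card L - card B"
        using B fin by (simp add: card_Diff_subset finite_subset)
      moreover have "card B \<le> card L" using B fin by (simp add: card_mono)
      ultimately have "card (L - (B \<union> T)) = s" using B s by simp
      moreover have "B \<union> T \<subseteq> U" using B(1) T(1) LR(1) by blast
      ultimately have "cross_inversions U (B \<union> T)
               = cross_inversions L B + cross_inversions R T + s * s"
        using cross_inversions_split[OF U, of "B \<union> T" c] halves_BT T
        by (simp add: L_def R_def)
      thus "q ^ cross_inversions U (fst BT \<union> snd BT) * \<phi> (card ((fst BT \<union> snd BT) \<inter> R)) =
            q ^ (s * s) * \<phi> s * (q ^ cross_inversions L (fst BT) * q ^ cross_inversions R (snd BT))"
        using halves_BT T by (simp add: BT power_add)
    qed
    also have "\<dots> = q ^ (s * s) * \<phi> s * (cross_weight q L (card L - s) * cross_weight q R s)"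
      using sum_cartesian_product_mult[where f = "\<lambda>B. q ^ cross_inversions L B"
          and g = "\<lambda>T. q ^ cross_inversions R T" and X = ?SB and Y = ?ST]
      by (simp add: sum_distrib_left[symmetric] cross_weight_def)
    finally show "(\<Sum>A\<in>?SA. q ^ cross_inversions U A * \<phi> (card (A \<inter> R))) =
                  q ^ (s * s) * \<phi> s * cross_weight q L (card L - s) * cross_weight q R s"
      by (simp add: mult.assoc)
  qed
  finally show ?thesis .
qed

definition qbinom_pair_sum :: "real \<Rightarrow> (nat \<Rightarrow> real) \<Rightarrow> nat \<Rightarrow> nat \<Rightarrow> real" where
  "qbinom_pair_sum q c a b = (\<Sum>s=0..a. q ^ (s * s) * c s * qbinom q a (a - s) * qbinom q b s)"

lemma qbinom_vandermonde: "qbinom q (a + b) a = qbinom_pair_sum q (\<lambda>_. 1) a b"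
proof -
  define U where "U = {1..a + b}"
  define L where "L = {u \<in> U. u < a + 1}"
  define R where "R = {u \<in> U. a + 1 \<le> u}"
  have "L = {1..a}" "R = {a + 1..a + b}" by (auto simp: L_def R_def U_def)
  hence card_LR: "card L = a" "card R = b" by auto
  have fin: "finite U" "finite L" "finite R" by (simp_all add: U_def L_def R_def)
  have "qbinom q (a + b) a = cross_weight q U (card L)"
    using cross_weight_eq_qbinom[OF fin(1)] card_LR by (simp add: U_def)
  also have "\<dots> = (\<Sum>A\<in>{A. A \<subseteq> U \<and> card A = card L}.
                      q ^ cross_inversions U A * (\<lambda>_. 1) (card (A \<inter> R)))"
    by (simp add: cross_weight_def)
  also have "\<dots> = (\<Sum>s=0..card L. q ^ (s * s) * (\<lambda>_. 1) s
                      * cross_weight q L (card L - s) * cross_weight q R s)"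
    unfolding L_def R_def by (rule sum_subsets_split[OF fin(1)])
  also have "\<dots> = qbinom_pair_sum q (\<lambda>_. 1) a b"
    by (simp only: cross_weight_eq_qbinom[OF fin(2)] cross_weight_eq_qbinom[OF fin(3)] card_LR
          qbinom_pair_sum_def)
  finally show ?thesis .
qed

lemma qfact_add: "qfact q (a + b) = qfact q a * qfact q b * qbinom_pair_sum q (\<lambda>_. 1) a b"
  using qbinom_qfact[of a "a + b" q] by (simp add: qbinom_vandermonde mult_ac)

lemma sum_bijs_fixing_min:
  assumes fin: "finite P" "finite V" and i: "i \<in> P" "\<forall>x\<in>P. i \<le> x" and card: "card V = card P"
  shows "(\<Sum>p\<in>{p\<in>bijs P V. p i = i}. q ^ inversions_on P p)
           = (if i \<in> V then q ^ rank_in V i * qfact q (card P - 1) else 0)"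
proof (cases "i \<in> V")
  case True
  have "inversion_weight q (P - {i}) (V - {i}) = qfact q (card P - 1)"
    using inversion_weight_eq_qfact[of "P - {i}" "V - {i}" q] fin i True card by simp
  thus ?thesis using sum_bijs_fix_min[OF fin(1) i True] True by simp
next
  case False
  have "p i \<noteq> i" if "p \<in> bijs P V" for p
  proof -
    have "p i \<in> p ` P" using i by auto
    hence "p i \<in> V" using that by (simp add: bijs_def bij_betw_def)
    thus ?thesis using False by auto
  qed
  hence none: "{p\<in>bijs P V. p i = i} = {}" by auto
  show ?thesis unfolding none using False by simp
qed

text \<open>Deleting the fixed value \<open>i\<close> from the range: it lies above exactly the points of \<open>A\<close> in
  \<open>R\<close>, and the values below \<open>i\<close> not in \<open>A\<close> are as many as the points of \<open>A\<close> in \<open>R\<close>.\<close>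
lemma cross_inversions_add_rank_in:
  assumes i: "1 \<le> i" "i \<le> n"
  defines "U \<equiv> {1..n} - {i}"
  defines "L \<equiv> {u \<in> U. u < i}" and "R \<equiv> {u \<in> U. i \<le> u}"
  assumes AU: "A \<subseteq> U" and card_A: "card A = card L"
  shows "cross_inversions {1..n} A + rank_in ({1..n} - A) i = cross_inversions U A + 2 * card (A \<inter> R)"
proof -
  have fin: "finite A" "finite L" using AU by (auto simp: U_def L_def finite_subset)
  have split: "{(u,w). u \<in> A \<and> w \<in> {1..n} - A \<and> w < u} =
      {(u,w). u \<in> A \<and> w \<in> U - A \<and> w < u} \<union> (\<lambda>u. (u,i)) ` (A \<inter> R)"
    using AU i unfolding U_def R_def by auto
  have "cross_inversions {1..n} A
      = card {(u,w). u \<in> A \<and> w \<in> U - A \<and> w < u} + card ((\<lambda>u. (u,i)) ` (A \<inter> R))"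
    unfolding cross_inversions_def split
    by (rule card_Un_disjoint) (use fin AU in \<open>auto intro: finite_subset[of _ "A \<times> A \<union> A \<times> {1..n}"] simp: U_def\<close>)
  also have "card ((\<lambda>u. (u,i)) ` (A \<inter> R)) = card (A \<inter> R)"
    by (rule card_image) (simp add: inj_on_def)
  finally have cross: "cross_inversions {1..n} A = cross_inversions U A + card (A \<inter> R)"
    by (simp add: cross_inversions_def)
  have "{y \<in> {1..n} - A. y < i} = L - A" using i unfolding L_def U_def by auto
  hence "rank_in ({1..n} - A) i = card L - card (L \<inter> A)"
    using fin by (simp add: rank_in_def card_Diff_subset_Int)
  also have "card A = card (A \<inter> L) + card (A \<inter> R)"
  proof -
    have "A = (A \<inter> L) \<union> (A \<inter> R)" using AU unfolding L_def R_def U_def by auto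
    also have "card \<dots> = card (A \<inter> L) + card (A \<inter> R)"
      by (rule card_Un_disjoint) (use fin in \<open>auto simp: L_def R_def\<close>)
    finally show ?thesis .
  qed
  hence "card L - card (L \<inter> A) = card (A \<inter> R)" using card_A by (simp add: Int_commute)
  finally show ?thesis using cross by simp
qed

lemma sum_glue_fixed_point:
  assumes i: "1 \<le> i" "i \<le> n" and AV: "A \<subseteq> {1..n}" and card_A: "card A = i - 1"
  shows "(\<Sum>pp\<in>bijs {1..i-1} A \<times> bijs {i..n} ({1..n} - A).
            if glue {1..i-1} (fst pp) (snd pp) i = i
            then q ^ inversions_on {1..n} (glue {1..i-1} (fst pp) (snd pp)) else 0)
       = qfact q (i - 1) * qfact q (n - i)
           * (if i \<notin> A then q ^ (cross_inversions {1..n} A + rank_in ({1..n} - A) i) else 0)"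
proof -
  let ?P1 = "{1..i-1}" and ?P2 = "{i..n}" and ?V = "{1..n}"
  have fin_A: "finite A" using AV finite_subset by blast
  have "(\<Sum>pp\<in>bijs ?P1 A \<times> bijs ?P2 (?V - A). if glue ?P1 (fst pp) (snd pp) i = i
            then q ^ inversions_on ?V (glue ?P1 (fst pp) (snd pp)) else 0)
      = (\<Sum>pp\<in>bijs ?P1 A \<times> bijs ?P2 (?V - A). (q ^ cross_inversions ?V A * q ^ inversions_on ?P1 (fst pp))
            * (if snd pp i = i then q ^ inversions_on ?P2 (snd pp) else 0))"
  proof (rule sum.cong[OF refl])
    fix pp assume pp: "pp \<in> bijs ?P1 A \<times> bijs ?P2 (?V - A)"
    have "inversions_on (?P1 \<union> ?P2) (glue ?P1 (fst pp) (snd pp))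
            = inversions_on ?P1 (fst pp) + inversions_on ?P2 (snd pp) + cross_inversions ?V A"
      by (rule inversions_on_glue) (use pp in auto)
    moreover have "?P1 \<union> ?P2 = ?V" using i by auto
    moreover have "glue ?P1 (fst pp) (snd pp) i = snd pp i" using i by (auto simp: glue_def)
    ultimately show "(if glue ?P1 (fst pp) (snd pp) i = i
            then q ^ inversions_on ?V (glue ?P1 (fst pp) (snd pp)) else 0) =
       (q ^ cross_inversions ?V A * q ^ inversions_on ?P1 (fst pp))
         * (if snd pp i = i then q ^ inversions_on ?P2 (snd pp) else 0)"
      by (simp add: power_add)
  qed
  also have "\<dots> = (\<Sum>p1\<in>bijs ?P1 A. q ^ cross_inversions ?V A * q ^ inversions_on ?P1 p1) *
                  (\<Sum>p2\<in>bijs ?P2 (?V - A). if p2 i = i then q ^ inversions_on ?P2 p2 else 0)"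
    by (rule sum_cartesian_product_mult)
  also have "(\<Sum>p2\<in>bijs ?P2 (?V - A). if p2 i = i then q ^ inversions_on ?P2 p2 else 0)
           = (\<Sum>p2\<in>{p2\<in>bijs ?P2 (?V - A). p2 i = i}. q ^ inversions_on ?P2 p2)"
    by (simp add: sum.inter_filter finite_bijs)
  also have "(\<Sum>p1\<in>bijs ?P1 A. q ^ cross_inversions ?V A * q ^ inversions_on ?P1 p1)
           = q ^ cross_inversions ?V A * qfact q (i - 1)"
    using inversion_weight_eq_qfact[of ?P1 A q] fin_A card_A
    by (simp add: inversion_weight_def sum_distrib_left[symmetric])
  also have "(\<Sum>p2\<in>{p2\<in>bijs ?P2 (?V - A). p2 i = i}. q ^ inversions_on ?P2 p2)
           = (if i \<in> A then 0 else q ^ rank_in (?V - A) i * qfact q (n - i))"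
  proof -
    have "card (?V - A) = card ?P2" using AV card_A fin_A i by (simp add: card_Diff_subset)
    thus ?thesis using sum_bijs_fixing_min[of ?P2 "?V - A" i q] i by auto
  qed
  finally show ?thesis by (simp add: power_add)
qed

lemma sum_fixed_point_weight:
  assumes i: "1 \<le> i" "i \<le> n"
  shows "(\<Sum>p\<in>bijs {1..n} {1..n}. if p i = i then q ^ inversions_on {1..n} p else 0)
        = qfact q (i - 1) * qfact q (n - i) * qbinom_pair_sum q (\<lambda>s. q ^ (2 * s)) (i - 1) (n - i)"
proof -
  let ?P1 = "{1..i-1}" and ?P2 = "{i..n}" and ?V = "{1..n}"
  define U where "U = ?V - {i}"
  define L where "L = {u \<in> U. u < i}"
  define R where "R = {u \<in> U. i \<le> u}"
  have "L = {1..i-1}" "R = {i+1..n}" using i by (auto simp: L_def R_def U_def)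
  hence card_LR: "card L = i - 1" "card R = n - i" by auto
  have fin: "finite U" "finite L" "finite R" by (simp_all add: U_def L_def R_def)
  have subsets: "{A \<in> {A. A \<subseteq> ?V \<and> card A = i - 1}. i \<notin> A} = {A. A \<subseteq> U \<and> card A = card L}"
    using card_LR unfolding U_def by auto
  have fin_S: "finite {A. A \<subseteq> ?V \<and> card A = i - 1}" by simp
  have union: "?P1 \<union> ?P2 = ?V" using i by auto
  have "(\<Sum>p\<in>bijs ?V ?V. if p i = i then q ^ inversions_on ?V p else 0)
      = (\<Sum>A\<in>{A. A \<subseteq> ?V \<and> card A = i - 1}. \<Sum>pp\<in>bijs ?P1 A \<times> bijs ?P2 (?V - A).
           if glue ?P1 (fst pp) (snd pp) i = i
           then q ^ inversions_on ?V (glue ?P1 (fst pp) (snd pp)) else 0)"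
    using sum_bijs_Un[of ?P1 ?P2 ?V "\<lambda>p. if p i = i then q ^ inversions_on ?V p else 0"]
    by (simp only: union card_atLeastAtMost finite_atLeastAtMost Int_atLeastAtMost) simp
  also have "\<dots> = (\<Sum>A\<in>{A. A \<subseteq> ?V \<and> card A = i - 1}. qfact q (i - 1) * qfact q (n - i)
      * (if i \<notin> A then q ^ (cross_inversions ?V A + rank_in (?V - A) i) else 0))"
    by (intro sum.cong refl sum_glue_fixed_point i) auto
  also have "\<dots> = qfact q (i - 1) * qfact q (n - i) * (\<Sum>A\<in>{A. A \<subseteq> ?V \<and> card A = i - 1}.
      if i \<notin> A then q ^ (cross_inversions ?V A + rank_in (?V - A) i) else 0)"
    by (simp only: sum_distrib_left)
  also have "\<dots> = qfact q (i - 1) * qfact q (n - i) * (\<Sum>A\<in>{A. A \<subseteq> U \<and> card A = card L}.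
                    q ^ (cross_inversions ?V A + rank_in (?V - A) i))"
    by (simp only: sum.inter_filter[OF fin_S, symmetric] subsets)
  also have "(\<Sum>A\<in>{A. A \<subseteq> U \<and> card A = card L}. q ^ (cross_inversions ?V A + rank_in (?V - A) i))
      = (\<Sum>A\<in>{A. A \<subseteq> U \<and> card A = card L}. q ^ cross_inversions U A * q ^ (2 * card (A \<inter> R)))"
    by (rule sum.cong) (use cross_inversions_add_rank_in[OF i] in \<open>auto simp: U_def L_def R_def power_add\<close>)
  also have "\<dots> = qbinom_pair_sum q (\<lambda>s. q ^ (2 * s)) (i - 1) (n - i)"
    using sum_subsets_split[OF fin(1), of q "\<lambda>s. q ^ (2 * s)" i]
    by (simp only: L_def[symmetric] R_def[symmetric] cross_weight_eq_qbinom[OF fin(2)]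
          cross_weight_eq_qbinom[OF fin(3)] card_LR qbinom_pair_sum_def)
  finally show ?thesis .
qed

lemma inversions_eq_inversions_on: "inversions n p = inversions_on {1..n} p"
  unfolding inversions_def inversions_on_def by (rule arg_cong[where f = card]) auto

lemma mallows_Z_eq_qfact: "mallows_Z q n = qfact q n"
  using inversion_weight_eq_qfact[of "{1..n}" "{1..n}" q]
  by (simp add: mallows_Z_def inversion_weight_def permutes_eq_bijs inversions_eq_inversions_on)

lemma sum_weighted_fixed_points:
  "(\<Sum>p\<in>{p. p permutes {1..n}}. q ^ inversions n p * real (fixed_points n p))
     = (\<Sum>i=1..n. qfact q (i - 1) * qfact q (n - i) * qbinom_pair_sum q (\<lambda>s. q ^ (2 * s)) (i - 1) (n - i))"
proof -
  have "real (fixed_points n p) = (\<Sum>i=1..n. if p i = i then 1 else 0)" for p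
    using sum.inter_filter[of "{1..n}" "\<lambda>_. 1 :: real" "\<lambda>i. p i = i"]
    by (simp add: fixed_points_def)
  hence "(\<Sum>p\<in>{p. p permutes {1..n}}. q ^ inversions n p * real (fixed_points n p))
      = (\<Sum>p\<in>bijs {1..n} {1..n}. \<Sum>i=1..n. if p i = i then q ^ inversions_on {1..n} p else 0)"
    by (simp add: permutes_eq_bijs inversions_eq_inversions_on sum_distrib_left if_distrib cong: if_cong)
  also have "\<dots> = (\<Sum>i=1..n. \<Sum>p\<in>bijs {1..n} {1..n}. if p i = i then q ^ inversions_on {1..n} p else 0)"
    by (rule sum.swap)
  also have "\<dots> = (\<Sum>i=1..n. qfact q (i - 1) * qfact q (n - i)
                      * qbinom_pair_sum q (\<lambda>s. q ^ (2 * s)) (i - 1) (n - i))"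
    by (rule sum.cong[OF refl], rule sum_fixed_point_weight) auto
  finally show ?thesis .
qed

lemma one_minus_sum_le_prod_one_minus:
  fixes x :: "'a \<Rightarrow> real"
  assumes "finite J" and "\<And>j. j \<in> J \<Longrightarrow> 0 \<le> x j \<and> x j \<le> 1"
  shows "1 - (\<Sum>j\<in>J. x j) \<le> (\<Prod>j\<in>J. 1 - x j)"
  using assms
proof (induction J rule: finite_induct)
  case (insert j J)
  have "0 \<le> x j" "x j \<le> 1" "0 \<le> (\<Sum>j\<in>J. x j)" using insert by (auto intro: sum_nonneg)
  hence "1 - (x j + (\<Sum>j\<in>J. x j)) \<le> (1 - x j) * (1 - (\<Sum>j\<in>J. x j))"
    by (simp add: algebra_simps)
  also have "\<dots> \<le> (1 - x j) * (\<Prod>j\<in>J. 1 - x j)"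
    using insert \<open>x j \<le> 1\<close> by (intro mult_left_mono) auto
  finally show ?case using insert by simp
qed simp

definition qpoch :: "real \<Rightarrow> nat \<Rightarrow> real" where
  "qpoch q k = (\<Prod>j=1..k. 1 - q ^ j)"

definition qfall :: "real \<Rightarrow> nat \<Rightarrow> nat \<Rightarrow> real" where
  "qfall q m s = (if s \<le> m then qpoch q m / qpoch q (m - s) else 0)"

lemma qint_mult_one_minus: "qint q j * (1 - q) = 1 - q ^ j"
proof (induction j)
  case (Suc j)
  have "qint q (Suc j) * (1 - q) = qint q j * (1 - q) + q ^ j * (1 - q)"
    by (simp add: qint_Suc algebra_simps)
  thus ?case using Suc by (simp add: algebra_simps)
qed (simp add: qint_def)

lemma qfact_mult_power_one_minus: "qfact q k * (1 - q) ^ k = qpoch q k"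
proof (induction k)
  case (Suc k)
  have "qfact q (Suc k) * (1 - q) ^ Suc k = (qint q (Suc k) * (1 - q)) * (qfact q k * (1 - q) ^ k)"
    by (simp add: qfact_Suc algebra_simps)
  also have "\<dots> = qpoch q k * (1 - q ^ Suc k)"
    using Suc.IH qint_mult_one_minus[of q "Suc k"] by (simp only: mult.commute)
  finally show ?case by (simp add: qpoch_def prod.cl_ivl_Suc)
qed (simp add: qfact_def qpoch_def)

lemma qbinom_qpoch:
  assumes "k \<le> m"
  shows "qbinom q m k * qpoch q k * qpoch q (m - k) = qpoch q m"
proof -
  have "qbinom q m k * qpoch q k * qpoch q (m - k)
      = (qbinom q m k * qfact q k * qfact q (m - k)) * (1 - q) ^ (k + (m - k))"
    by (simp add: power_add algebra_simps flip: qfact_mult_power_one_minus)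
  also have "\<dots> = qpoch q m"
    using assms by (simp add: qbinom_qfact qfact_mult_power_one_minus)
  finally show ?thesis .
qed

lemma qpoch_add: "qpoch q (k + s) = qpoch q k * (\<Prod>j=1..s. 1 - q ^ (k + j))"
  by (induction s) (simp_all add: qpoch_def prod.cl_ivl_Suc)

lemma nu_weight_Suc: "nu_weight q (Suc s) = nu_weight q s * (q ^ (2 * s + 1) / (1 - q ^ Suc s) ^ 2)"
  unfolding nu_weight_def by (simp add: prod.cl_ivl_Suc)

lemma abs_divide_diff_le:
  fixes N D N' D' :: real
  assumes "1 \<le> D" "1 \<le> D'" "0 \<le> N'" "N' \<le> D'"
  shows "\<bar>N / D - N' / D'\<bar> \<le> \<bar>N - N'\<bar> + \<bar>D - D'\<bar>"
proof -
  have "N / D - N' / D' = (N - N') / D + (N' / D') * ((D' - D) / D)"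
    using assms by (simp add: field_simps)
  also have "\<bar>\<dots>\<bar> \<le> \<bar>N - N'\<bar> / D + (N' / D') * (\<bar>D' - D\<bar> / D)"
    using assms abs_triangle_ineq[of "(N - N') / D" "(N' / D') * ((D' - D) / D)"]
    by (simp add: abs_mult abs_divide)
  also have "\<dots> \<le> \<bar>N - N'\<bar> + 1 * \<bar>D - D'\<bar>"
  proof (intro add_mono mult_mono)
    have "x / D \<le> x" if "0 \<le> x" for x
      using divide_left_mono[of 1 D x] that assms(1) by simp
    thus "\<bar>N - N'\<bar> / D \<le> \<bar>N - N'\<bar>" "\<bar>D' - D\<bar> / D \<le> \<bar>D - D'\<bar>"
      by (simp_all add: abs_minus_commute)
  qed (use assms in auto)
  finally show ?thesis by simp
qed

definition fixed_point_ratio :: "real \<Rightarrow> nat \<Rightarrow> nat \<Rightarrow> real" where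
  "fixed_point_ratio q a b = qbinom_pair_sum q (\<lambda>s. q ^ (2 * s)) a b / qbinom_pair_sum q (\<lambda>_. 1) a b"

context
  fixes q :: real
  assumes q0: "0 < q" and q1: "q < 1"
begin

lemma qpoch_pos: "qpoch q k > 0"
  unfolding qpoch_def using q0 q1 by (intro prod_pos) (auto simp: power_less_one_iff)

lemma qfact_pos: "qfact q k > 0"
proof -
  have "0 < qfact q k * (1 - q) ^ k" "0 < (1 - q) ^ k"
    using qfact_mult_power_one_minus[of q k] qpoch_pos[of k] q1 by simp_all
  thus ?thesis using zero_less_mult_pos2 by blast
qed

lemma qbinom_eq_qfall: "qbinom q m s = qfall q m s / qpoch q s"
  using qbinom_qpoch[of s m q] qpoch_pos[of s] qpoch_pos[of "m - s"]
  by (cases "s \<le> m") (auto simp: qfall_def qbinom_eq_0 field_simps)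

lemma qbinom_complement_eq_qfall: "s \<le> m \<Longrightarrow> qbinom q m (m - s) = qfall q m s / qpoch q s"
  using qbinom_qpoch[of "m - s" m q] qpoch_pos[of s] qpoch_pos[of "m - s"]
  by (simp add: qfall_def field_simps)

lemma qfall_eq_prod: "s \<le> m \<Longrightarrow> qfall q m s = (\<Prod>j=1..s. 1 - q ^ (m - s + j))"
  using qpoch_add[of q "m - s" s] qpoch_pos[of "m - s"] by (simp add: qfall_def)

lemma qfall_bounds: "0 \<le> qfall q m s" "qfall q m s \<le> 1"
proof -
  have factor: "0 \<le> 1 - q ^ j \<and> 1 - q ^ j \<le> 1" for j using q0 q1 by (simp add: power_le_one)
  show "0 \<le> qfall q m s"
    using factor by (cases "s \<le> m") (simp add: qfall_eq_prod prod_nonneg, simp add: qfall_def)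
  show "qfall q m s \<le> 1"
    using factor by (cases "s \<le> m") (simp add: qfall_eq_prod prod_le_1, simp add: qfall_def)
qed

lemma one_minus_qfall_le: "1 - qfall q m s \<le> q ^ (m + 1) / ((1 - q) * q ^ s)"
proof (cases "s \<le> m")
  case True
  define k where "k = m - s"
  have "1 - qfall q m s \<le> (\<Sum>j=1..s. q ^ (k + j))"
    using one_minus_sum_le_prod_one_minus[of "{1..s}" "\<lambda>j. q ^ (k + j)"] q0 q1 True
    by (simp add: qfall_eq_prod k_def power_le_one)
  also have "(\<Sum>j=1..s. q ^ (k + j)) = (\<Sum>j<s. q ^ (k + Suc j))"
    by (rule sum.reindex_bij_witness[of _ Suc "\<lambda>j. j - 1"]) auto
  also have "\<dots> = q ^ (k + 1) * (\<Sum>j<s. q ^ j)"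
    by (simp add: sum_distrib_left power_add mult.assoc)
  also have "\<dots> \<le> q ^ (k + 1) / (1 - q)"
    using q0 q1 by (simp add: sum_gp_strict divide_right_mono mult_left_le)
  also have "\<dots> = q ^ (m + 1) / ((1 - q) * q ^ s)"
    using q0 q1 True by (simp add: k_def field_simps flip: power_add)
  finally show ?thesis .
next
  case False
  have "q ^ s \<le> q ^ (m + 1)" using False q0 q1 by (intro power_decreasing) auto
  hence "1 \<le> q ^ (m + 1) / q ^ s" using q0 by simp
  also have "\<dots> \<le> q ^ (m + 1) / ((1 - q) * q ^ s)"
    using q0 q1 by (intro divide_left_mono) (auto simp: mult_le_cancel_right1)
  finally show ?thesis using False by (simp add: qfall_def)
qed

lemma one_minus_qfall_mult_le:
  "1 - qfall q a s * qfall q b s \<le> (q ^ (a + 1) + q ^ (b + 1)) / (1 - q) / q ^ s"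
proof -
  have "1 - qfall q a s * qfall q b s \<le> (1 - qfall q a s) + (1 - qfall q b s)"
    using qfall_bounds[of a s] qfall_bounds[of b s] mult_nonneg_nonneg[of "1 - qfall q a s" "1 - qfall q b s"]
    by (simp add: algebra_simps)
  also have "\<dots> \<le> (q ^ (a + 1) + q ^ (b + 1)) / (1 - q) / q ^ s"
    using one_minus_qfall_le[of a s] one_minus_qfall_le[of b s] by (simp add: add_divide_distrib)
  finally show ?thesis .
qed

lemma nu_weight_qpoch: "nu_weight q s * qpoch q s ^ 2 = q ^ (s * s)"
proof (induction s)
  case (Suc s)
  have "1 - q ^ Suc s \<noteq> 0" using q0 q1 power_Suc_less_one[of q s] by simp
  hence "nu_weight q (Suc s) * qpoch q (Suc s) ^ 2 = (nu_weight q s * qpoch q s ^ 2) * q ^ (2 * s + 1)"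
    by (simp add: nu_weight_Suc qpoch_def prod.cl_ivl_Suc power_mult_distrib)
  also have "\<dots> = q ^ (s * s + (2 * s + 1))" using Suc by (simp add: power_add)
  also have "s * s + (2 * s + 1) = Suc s * Suc s" by simp
  finally show ?case .
qed (simp add: nu_weight_def qpoch_def)

lemma nu_weight_pos: "nu_weight q s > 0"
  unfolding nu_weight_def
proof (intro prod_pos ballI)
  fix a assume "a \<in> {1..s}"
  hence "q ^ a < 1" using q0 q1 by (simp add: power_less_one_iff)
  thus "0 < q ^ (2 * a - 1) / (1 - q ^ a)\<^sup>2" using q0 by simp
qed

text \<open>The factor \<open>1 / q ^ s\<close> is the one in \<open>one_minus_qfall_le\<close>; it is harmless because
  \<open>nu_weight q s\<close> decays like \<open>q ^ (s * s)\<close>.\<close>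
lemma summable_nu_weight_div_power: "summable (\<lambda>s. nu_weight q s / q ^ s)"
proof -
  have "(1 - q)^2 / 2 > 0" using q1 by simp
  then obtain N where N: "q ^ N < (1 - q)^2 / 2" using real_arch_pow_inv[OF _ q1] by blast
  show ?thesis
  proof (rule summable_ratio_test[where c = "1/2" and N = N])
    fix s assume s: "N \<le> s"
    let ?v = "\<lambda>s. nu_weight q s / q ^ s"
    have "q ^ (2 * s) \<le> q ^ N" using s q0 q1 by (intro power_decreasing) auto
    moreover have "(1 - q) ^ 2 \<le> (1 - q ^ Suc s) ^ 2"
      using q0 q1 by (intro power_mono) (auto simp: mult_left_le power_le_one)
    ultimately have "q ^ (2 * s) / (1 - q ^ Suc s) ^ 2 \<le> ((1 - q)^2 / 2) / (1 - q) ^ 2"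
      using N q1 by (intro frac_le) auto
    hence ratio: "q ^ (2 * s) / (1 - q ^ Suc s) ^ 2 \<le> 1/2" using q1 by simp
    have "?v (Suc s) = ?v s * (q ^ (2 * s) / (1 - q ^ Suc s) ^ 2)"
      using q0 by (simp add: nu_weight_Suc field_simps power_add mult_2)
    hence "?v (Suc s) \<le> 1/2 * ?v s"
      using mult_left_mono[OF ratio, of "?v s"] nu_weight_pos[of s] q0 by (simp add: mult.commute)
    thus "norm (?v (Suc s)) \<le> 1/2 * norm (?v s)"
      using nu_weight_pos[of s] nu_weight_pos[of "Suc s"] q0 by simp
  qed simp
qed

lemma summable_nu_weight_mult:
  assumes c: "\<And>s. 0 \<le> c s \<and> c s \<le> 1"
  shows "summable (\<lambda>s. nu_weight q s * c s)"
proof (rule summable_comparison_test'[OF summable_nu_weight_div_power, of 0])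
  fix s :: nat
  have "norm (nu_weight q s * c s) \<le> nu_weight q s"
    using c[of s] nu_weight_pos[of s] by (simp add: abs_mult mult_left_le)
  also have "\<dots> \<le> nu_weight q s / q ^ s"
    using nu_weight_pos[of s] q0 q1 by (simp add: le_divide_eq mult_left_le power_le_one)
  finally show "norm (nu_weight q s * c s) \<le> nu_weight q s / q ^ s" .
qed

lemma qbinom_pair_sum_eq_suminf:
  "qbinom_pair_sum q c a b = (\<Sum>s. nu_weight q s * c s * qfall q a s * qfall q b s)"
proof -
  have "(\<Sum>s. nu_weight q s * c s * qfall q a s * qfall q b s)
      = (\<Sum>s=0..a. nu_weight q s * c s * qfall q a s * qfall q b s)"
    by (rule suminf_finite) (auto simp: qfall_def)
  also have "\<dots> = qbinom_pair_sum q c a b"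
    unfolding qbinom_pair_sum_def
  proof (rule sum.cong[OF refl])
    fix s assume "s \<in> {0..a}"
    hence "qbinom q a (a - s) = qfall q a s / qpoch q s" by (simp add: qbinom_complement_eq_qfall)
    thus "nu_weight q s * c s * qfall q a s * qfall q b s
            = q ^ (s * s) * c s * qbinom q a (a - s) * qbinom q b s"
      using qpoch_pos[of s] unfolding qbinom_eq_qfall[of b s] nu_weight_qpoch[symmetric]
      by (simp add: field_simps power2_eq_square)
  qed
  finally show ?thesis by simp
qed

lemma qbinom_pair_sum_approx:
  assumes c: "\<And>s. 0 \<le> c s \<and> c s \<le> 1"
  shows "\<bar>qbinom_pair_sum q c a b - (\<Sum>s. nu_weight q s * c s)\<bar>
           \<le> (q ^ (a + 1) + q ^ (b + 1)) / (1 - q) * (\<Sum>s. nu_weight q s / q ^ s)"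
proof -
  let ?K = "(q ^ (a + 1) + q ^ (b + 1)) / (1 - q)"
  let ?t = "\<lambda>s. qfall q a s * qfall q b s"
  have t: "0 \<le> ?t s" "?t s \<le> 1" for s
    using qfall_bounds[of a s] qfall_bounds[of b s] by (auto intro: mult_le_one)
  have "summable (\<lambda>s. nu_weight q s * (c s * ?t s))"
    by (rule summable_nu_weight_mult) (use c t in \<open>auto intro: mult_le_one\<close>)
  hence sums: "summable (\<lambda>s. nu_weight q s * c s)" "summable (\<lambda>s. nu_weight q s * c s * ?t s)"
    "summable (\<lambda>s. nu_weight q s / q ^ s)"
    using summable_nu_weight_mult[OF c] summable_nu_weight_div_power by (simp_all add: mult.assoc)
  have gap: "0 \<le> nu_weight q s * c s - nu_weight q s * c s * ?t s"
    "nu_weight q s * c s - nu_weight q s * c s * ?t s \<le> ?K * (nu_weight q s / q ^ s)" for s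
  proof -
    have nu: "0 < nu_weight q s" by (rule nu_weight_pos)
    have "nu_weight q s * (1 - ?t s) \<le> nu_weight q s * (?K / q ^ s)"
      using nu one_minus_qfall_mult_le[of a s b] by (intro mult_left_mono) auto
    moreover have "c s * (1 - ?t s) \<le> 1 - ?t s"
      using c[of s] t[of s] by (intro mult_left_le_one_le) auto
    hence "nu_weight q s * c s * (1 - ?t s) \<le> nu_weight q s * (1 - ?t s)"
      using nu by (simp add: mult.assoc mult_left_mono)
    moreover have "0 \<le> nu_weight q s * c s * (1 - ?t s)" using nu c[of s] t[of s] by simp
    moreover have "nu_weight q s * c s - nu_weight q s * c s * ?t s = nu_weight q s * c s * (1 - ?t s)"
      by (simp add: algebra_simps)
    moreover have "?K * (nu_weight q s / q ^ s) = nu_weight q s * (?K / q ^ s)" by simp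
    ultimately show "0 \<le> nu_weight q s * c s - nu_weight q s * c s * ?t s"
      "nu_weight q s * c s - nu_weight q s * c s * ?t s \<le> ?K * (nu_weight q s / q ^ s)"
      by linarith+
  qed
  have "(\<Sum>s. nu_weight q s * c s) - (\<Sum>s. nu_weight q s * c s * ?t s)
      = (\<Sum>s. nu_weight q s * c s - nu_weight q s * c s * ?t s)"
    using sums by (intro suminf_diff) auto
  moreover have "0 \<le> (\<Sum>s. nu_weight q s * c s - nu_weight q s * c s * ?t s)"
    using sums gap by (intro suminf_nonneg summable_diff) auto
  moreover have "(\<Sum>s. nu_weight q s * c s - nu_weight q s * c s * ?t s)
      \<le> (\<Sum>s. ?K * (nu_weight q s / q ^ s))"
    using sums gap by (intro suminf_le summable_diff summable_mult) auto
  moreover have "(\<Sum>s. ?K * (nu_weight q s / q ^ s)) = ?K * (\<Sum>s. nu_weight q s / q ^ s)"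
    using sums by (intro suminf_mult) auto
  ultimately show ?thesis
    by (simp add: qbinom_pair_sum_eq_suminf mult.assoc)
qed

lemma qbinom_pair_sum_ge_1: "1 \<le> qbinom_pair_sum q (\<lambda>_. 1) a b"
proof -
  have nonneg: "0 \<le> nu_weight q s * 1 * qfall q a s * qfall q b s" for s
    using nu_weight_pos[of s] qfall_bounds(1)[of a s] qfall_bounds(1)[of b s] by simp
  have "summable (\<lambda>s. nu_weight q s * 1 * qfall q a s * qfall q b s)"
    using summable_nu_weight_mult[of "\<lambda>s. qfall q a s * qfall q b s"] qfall_bounds
    by (simp add: mult.assoc mult_le_one)
  hence "(\<Sum>s\<in>{0}. nu_weight q s * 1 * qfall q a s * qfall q b s)
           \<le> (\<Sum>s. nu_weight q s * 1 * qfall q a s * qfall q b s)"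
    using nonneg by (intro sum_le_suminf) auto
  thus ?thesis
    using qpoch_pos[of a] qpoch_pos[of b]
    by (simp add: qbinom_pair_sum_eq_suminf nu_weight_def qfall_def)
qed

lemma fixed_point_ratio_approx:
  defines "L \<equiv> (\<Sum>s. nu_weight q s * q ^ (2 * s)) / (\<Sum>s. nu_weight q s)"
    and "C \<equiv> 2 * (\<Sum>s. nu_weight q s / q ^ s) / (1 - q)"
  shows "\<bar>fixed_point_ratio q a b - L\<bar> \<le> C * (q ^ (a + 1) + q ^ (b + 1))"
proof -
  have c: "0 \<le> q ^ (2 * s) \<and> q ^ (2 * s) \<le> 1" "0 \<le> (1::real) \<and> (1::real) \<le> 1" for s :: nat
    using q0 q1 by (auto simp: power_le_one)
  have "(\<Sum>s\<in>{0}. nu_weight q s) \<le> (\<Sum>s. nu_weight q s)"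
    using summable_nu_weight_mult[of "\<lambda>_. 1"] nu_weight_pos
    by (intro sum_le_suminf) (auto intro: less_imp_le)
  hence "1 \<le> (\<Sum>s. nu_weight q s)" by (simp add: nu_weight_def)
  moreover have "0 \<le> (\<Sum>s. nu_weight q s * q ^ (2 * s))"
    using summable_nu_weight_mult[OF c(1)] nu_weight_pos q0
    by (intro suminf_nonneg) (auto intro: less_imp_le)
  moreover have "(\<Sum>s. nu_weight q s * q ^ (2 * s)) \<le> (\<Sum>s. nu_weight q s)"
    using summable_nu_weight_mult[OF c(1)] summable_nu_weight_mult[OF c(2)] nu_weight_pos c(1)
    by (intro suminf_le) (auto intro: mult_left_le less_imp_le)
  ultimately have "\<bar>fixed_point_ratio q a b - L\<bar>
      \<le> \<bar>qbinom_pair_sum q (\<lambda>s. q ^ (2 * s)) a b - (\<Sum>s. nu_weight q s * q ^ (2 * s))\<bar>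
        + \<bar>qbinom_pair_sum q (\<lambda>_. 1) a b - (\<Sum>s. nu_weight q s)\<bar>"
    unfolding fixed_point_ratio_def L_def by (intro abs_divide_diff_le qbinom_pair_sum_ge_1) auto
  also have "\<dots> \<le> C * (q ^ (a + 1) + q ^ (b + 1))"
  proof -
    let ?E = "(q ^ (a + 1) + q ^ (b + 1)) / (1 - q) * (\<Sum>s. nu_weight q s / q ^ s)"
    have "\<bar>qbinom_pair_sum q (\<lambda>s. q ^ (2 * s)) a b - (\<Sum>s. nu_weight q s * q ^ (2 * s))\<bar> \<le> ?E"
      by (rule qbinom_pair_sum_approx) (use c in auto)
    moreover have "\<bar>qbinom_pair_sum q (\<lambda>_. 1) a b - (\<Sum>s. nu_weight q s)\<bar> \<le> ?E"
      using qbinom_pair_sum_approx[of "\<lambda>_. 1"] by simp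
    moreover have "2 * ?E = C * (q ^ (a + 1) + q ^ (b + 1))" by (simp add: C_def field_simps)
    ultimately show ?thesis by linarith
  qed
  finally show ?thesis .
qed

lemma suminf_mallows_nu:
  "(\<Sum>s. mallows_nu q s * q ^ (2 * s) * (1 - q))
     = (\<Sum>s. nu_weight q s * q ^ (2 * s)) / (\<Sum>s. nu_weight q s) * (1 - q)"
proof -
  have "summable (\<lambda>s. nu_weight q s * q ^ (2 * s))"
    using q0 q1 by (intro summable_nu_weight_mult) (auto simp: power_le_one)
  hence "(\<Sum>s. nu_weight q s * q ^ (2 * s) * ((1 - q) / (\<Sum>t. nu_weight q t)))
           = (\<Sum>s. nu_weight q s * q ^ (2 * s)) * ((1 - q) / (\<Sum>t. nu_weight q t))"
    by (rule suminf_mult2[symmetric])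
  thus ?thesis by (simp add: mallows_nu_def)
qed

lemma mallows_expected_fixed_points_eq:
  assumes "1 \<le> n"
  shows "mallows_expected_fixed_points q n = (\<Sum>i=1..n. fixed_point_ratio q (i - 1) (n - i)) / qint q n"
proof -
  have "qfact q n = qint q n * qfact q (n - 1)"
    using qfact_Suc[of q "n - 1"] assms by simp
  moreover have "qfact q (n - 1) = qfact q (i - 1) * qfact q (n - i) * qbinom_pair_sum q (\<lambda>_. 1) (i - 1) (n - i)"
    if "i \<in> {1..n}" for i
    using qfact_add[of q "i - 1" "n - i"] that by simp
  ultimately have "qfact q (i - 1) * qfact q (n - i) * qbinom_pair_sum q (\<lambda>s. q ^ (2 * s)) (i - 1) (n - i)
      / qfact q n = fixed_point_ratio q (i - 1) (n - i) / qint q n" if "i \<in> {1..n}" for i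
    using that qfact_pos[of "i - 1"] qfact_pos[of "n - i"] qbinom_pair_sum_ge_1[of "i - 1" "n - i"]
    by (simp add: fixed_point_ratio_def)
  thus ?thesis
    unfolding mallows_expected_fixed_points_def sum_weighted_fixed_points mallows_Z_eq_qfact
    by (simp add: sum_divide_distrib)
qed

lemma tendsto_qint: "(\<lambda>n. qint q n) \<longlonglongrightarrow> 1 / (1 - q)"
proof -
  have "(\<lambda>n. (1 - q ^ n) / (1 - q)) \<longlonglongrightarrow> (1 - 0) / (1 - q)"
    using q0 q1 by (intro tendsto_intros) auto
  moreover have "qint q n = (1 - q ^ n) / (1 - q)" for n
    using qint_mult_one_minus[of q n] q1 by (simp add: eq_divide_eq)
  ultimately show ?thesis by simp
qed

text \<open>A Cesaro average over the splittings \<open>(i - 1) + (n - i) = n - 1\<close>: the error terms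
  sum to a bounded quantity, so their average is \<open>O(1/n)\<close>.\<close>
lemma tendsto_average_exponential_approx:
  assumes approx: "\<And>a b. \<bar>h a b - L\<bar> \<le> C * (q ^ (a + 1) + q ^ (b + 1))"
  shows "(\<lambda>n. (\<Sum>i=1..n. h (i - 1) (n - i)) / real n) \<longlonglongrightarrow> L"
proof -
  have geometric: "(\<Sum>j<n. q ^ (j + 1)) \<le> 1 / (1 - q)" for n
  proof -
    have "(\<Sum>j<n. q ^ (j + 1)) = q * ((1 - q ^ n) / (1 - q))"
      using q1 by (simp add: sum_distrib_left[symmetric] sum_gp_strict)
    also have "\<dots> \<le> 1 * (1 / (1 - q))"
      using q0 q1 power_le_one[of q n] by (intro mult_mono) (auto simp: divide_right_mono)
    finally show ?thesis by simp
  qed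
  have "0 \<le> C" using approx[of 0 0] q0 by (smt (verit) mult_neg_pos zero_less_power)
  have bound: "\<bar>(\<Sum>i=1..n. h (i - 1) (n - i)) / real n - L\<bar> \<le> 2 * C / (1 - q) / real n"
    if "n \<ge> 1" for n
  proof -
    have "\<bar>(\<Sum>i=1..n. h (i - 1) (n - i)) / real n - L\<bar> = \<bar>\<Sum>i=1..n. h (i - 1) (n - i) - L\<bar> / real n"
      using that by (simp add: sum_subtractf field_simps)
    also have "\<dots> \<le> (\<Sum>i=1..n. C * (q ^ ((i - 1) + 1) + q ^ ((n - i) + 1))) / real n"
      by (intro divide_right_mono order_trans[OF sum_abs] sum_mono approx) simp
    also have "(\<Sum>i=1..n. C * (q ^ ((i - 1) + 1) + q ^ ((n - i) + 1)))
        = C * ((\<Sum>j<n. q ^ (j + 1)) + (\<Sum>j<n. q ^ (j + 1)))"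
    proof -
      have "(\<Sum>i=1..n. q ^ ((i - 1) + 1)) = (\<Sum>j<n. q ^ (j + 1))"
        by (rule sum.reindex_bij_witness[of _ "\<lambda>j. j + 1" "\<lambda>i. i - 1"]) auto
      moreover have "(\<Sum>i=1..n. q ^ ((n - i) + 1)) = (\<Sum>j<n. q ^ (j + 1))"
        by (rule sum.reindex_bij_witness[of _ "\<lambda>j. n - j" "\<lambda>i. n - i"]) auto
      ultimately show ?thesis by (simp only: sum_distrib_left[symmetric] sum.distrib)
    qed
    also have "\<dots> \<le> C * (1 / (1 - q) + 1 / (1 - q))"
      using geometric[of n] \<open>0 \<le> C\<close> by (intro mult_left_mono) auto
    finally show ?thesis by (simp add: divide_right_mono mult.commute)
  qed
  have "(\<lambda>n. (\<Sum>i=1..n. h (i - 1) (n - i)) / real n - L) \<longlonglongrightarrow> 0"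
  proof (rule Lim_null_comparison)
    show "\<forall>\<^sub>F n in sequentially. norm ((\<Sum>i=1..n. h (i - 1) (n - i)) / real n - L) \<le> 2 * C / (1 - q) / real n"
      using bound by (auto simp: eventually_sequentially intro!: exI[of _ 1])
  qed (rule lim_const_over_n)
  thus ?thesis by (simp add: LIM_zero_iff)
qed

end

theorem lemma6p1:
  fixes q :: real
  assumes "0 < q" and "q < 1"
  shows "(\<lambda>n. mallows_expected_fixed_points q n / real n)
           \<longlonglongrightarrow> (\<Sum>s. (mallows_nu q s * q ^ (2 * s) * (1 - q)))"
proof -
  define L where "L = (\<Sum>s. nu_weight q s * q ^ (2 * s)) / (\<Sum>s. nu_weight q s)"
  define A where "A n = (\<Sum>i=1..n. fixed_point_ratio q (i - 1) (n - i)) / real n" for n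
  have "A \<longlonglongrightarrow> L"
    unfolding A_def L_def
    by (rule tendsto_average_exponential_approx[OF assms fixed_point_ratio_approx[OF assms]])
  hence "(\<lambda>n. A n / qint q n) \<longlonglongrightarrow> L / (1 / (1 - q))"
    using tendsto_qint[OF assms] assms by (intro tendsto_divide) auto
  moreover have "\<forall>\<^sub>F n in sequentially. A n / qint q n = mallows_expected_fixed_points q n / real n"
    using mallows_expected_fixed_points_eq[OF assms]
    by (auto simp: eventually_sequentially A_def intro!: exI[of _ 1])
  ultimately have "(\<lambda>n. mallows_expected_fixed_points q n / real n) \<longlonglongrightarrow> L * (1 - q)"
    using Lim_transform_eventually by fastforce
  moreover have "(\<Sum>s. mallows_nu q s * q ^ (2 * s) * (1 - q)) = L * (1 - q)"
    unfolding L_def by (rule suminf_mallows_nu[OF assms])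
  ultimately show ?thesis by simp
qed

end
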